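(* Let $M\in\mathbb{N}$, let $I$ be a finite set and let $g_\bullet\colon\mathbb{Z}\to\{0,1,\dots,M-1\}$ be a gp map parametrised by $\mathbb{R}^I$. Then there exist a finite set $J$ and a gp map $\tilde g_\bullet\colon\mathbb{Z}\to\{0,1,\dots,M-1\}$ parametrised by $[0,1)^J$ such that $\tilde g_\bullet$ extends $g_\bullet$.
   Context: A generalised polynomial (gp) map $\mathbb{R}^d\to\mathbb{R}$ is an element of the smallest family containing all polynomial maps and closed under pointwise sum, pointwise product and pointwise integer part; a map into $\mathbb{R}^m$ is gp if each coordinate is. For pairwise disjoint finite sets $I_r,I_i,I_f$ and $\Omega = \mathbb{R}^{I_r}\times\mathbb{Z}^{I_i}\times[0,1)^{I_f}$, a gp map $\mathbb{Z}\to S$ ($S\subset\mathbb{R}$) parametrised by $\Omega$ is a family $(g_\alpha)_{\alpha\in\Omega}$ of maps $\mathbb{Z}\to S$ such that $(\alpha,n)\mapsto g_\alpha(n)$ is the restriction to $\Omega\times\mathbb{Z}$ of a gp map $\mathbb{R}^{I_r\cup I_i\cup I_f}\times\mathbb{R}\to\mathbb{R}$. If $g_\bullet$ is parametrised by $\Omega$ and $h_\bullet$ by $\Omega'=\mathbb{R}^{J_r}\times\mathbb{Z}^{J_i}\times[0,1)^{J_f}$, then $h_\bullet$ extends $g_\bullet$ if there is a gp map $\varphi\colon\mathbb{R}^{I_r\cup I_i\cup I_f}\to\mathbb{R}^{J_r\cup J_i\cup J_f}$ with $\varphi(\Omega)\subset\Omega'$ and $g_\alpha=h_{\varphi(\alpha)}$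 for all $\alpha\in\Omega$. *)

theory Defs
  imports Complex_Main
begin

inductive gp :: "'v set \<Rightarrow> (('v \<Rightarrow> real) \<Rightarrow> real) \<Rightarrow> bool" for V where
  gp_const: "gp V (\<lambda>x. c)"
| gp_var: "v \<in> V \<Longrightarrow> gp V (\<lambda>x. x v)"
| gp_add: "gp V f \<Longrightarrow> gp V g \<Longrightarrow> gp V (\<lambda>x. f x + g x)"
| gp_mult: "gp V f \<Longrightarrow> gp V g \<Longrightarrow> gp V (\<lambda>x. f x * g x)"
| gp_floor: "gp V f \<Longrightarrow> gp V (\<lambda>x. real_of_int \<lfloor>f x\<rfloor>)"

definition gp_map :: "'v set \<Rightarrow> 'w set \<Rightarrow> (('v \<Rightarrow> real) \<Rightarrow> ('w \<Rightarrow> real)) \<Rightarrow> bool" where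
  "gp_map V W \<phi> \<longleftrightarrow> (\<forall>w\<in>W. gp V (\<lambda>x. \<phi> x w)) \<and> (\<forall>x. \<forall>w. w \<notin> W \<longrightarrow> \<phi> x w = 0)"

text \<open>Parameter space \<open>\<Omega> = \<real>^Irr \<times> \<int>^Iii \<times> [0,1)^Iff\<close>, as functions vanishing outside
  \<open>Irr \<union> Iii \<union> Iff\<close>.\<close>
definition Omega :: "'v set \<Rightarrow> 'v set \<Rightarrow> 'v set \<Rightarrow> ('v \<Rightarrow> real) set" where
  "Omega Irr Iii Iff = {\<alpha>. (\<forall>i\<in>Iii. \<alpha> i \<in> \<int>) \<and> (\<forall>i\<in>Iff. 0 \<le> \<alpha> i \<and> \<alpha> i < 1)
                         \<and> (\<forall>i. i \<notin> Irr \<union> Iii \<union> Iff \<longrightarrow> \<alpha> i = 0)}"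

text \<open>A gp map \<open>\<int> \<rightarrow> S\<close> parametrised by \<open>\<Omega> = Omega Irr Iii Iff\<close>: the family
  \<open>(g \<alpha>)\<^sub>\<alpha>\<^sub>\<in>\<^sub>\<Omega>\<close> takes values in S and \<open>(\<alpha>,n) \<mapsto> g \<alpha> n\<close> is the restriction of a gp map
  on \<open>\<real>^(Irr \<union> Iii \<union> Iff) \<times> \<real>\<close> (the extra variable \<open>None\<close> is n).\<close>
definition gp_param :: "'v set \<Rightarrow> 'v set \<Rightarrow> 'v set \<Rightarrow> real set \<Rightarrow>
    (('v \<Rightarrow> real) \<Rightarrow> int \<Rightarrow> real) \<Rightarrow> bool" where
  "gp_param Irr Iii Iff S g \<longleftrightarrow>
     (\<forall>\<alpha>\<in>Omega Irr Iii Iff. \<forall>n. g \<alpha> n \<in> S) \<and>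
     (\<exists>F. gp (insert None (Some ` (Irr \<union> Iii \<union> Iff))) F \<and>
        (\<forall>\<alpha>\<in>Omega Irr Iii Iff. \<forall>n::int.
            g \<alpha> n = F (\<lambda>v. case v of None \<Rightarrow> real_of_int n | Some i \<Rightarrow> \<alpha> i)))"

definition gp_extends ::
    "'w set \<Rightarrow> 'w set \<Rightarrow> 'w set \<Rightarrow> (('w \<Rightarrow> real) \<Rightarrow> int \<Rightarrow> real) \<Rightarrow>
     'v set \<Rightarrow> 'v set \<Rightarrow> 'v set \<Rightarrow> (('v \<Rightarrow> real) \<Rightarrow> int \<Rightarrow> real) \<Rightarrow> bool" where
  "gp_extends Jr Ji Jf h Irr Iii Iff g \<longleftrightarrow>
     (\<exists>\<phi>. gp_map (Irr \<union> Iii \<union> Iff) (Jr \<union> Ji \<union> Jf) \<phi> \<and>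
          \<phi> ` Omega Irr Iii Iff \<subseteq> Omega Jr Ji Jf \<and>
          (\<forall>\<alpha>\<in>Omega Irr Iii Iff. g \<alpha> = h (\<phi> \<alpha>)))"

end

theory Submission
  imports Defs
begin

text \<open>By induction on gp expressions, every gp function \<open>F(\<alpha>, n)\<close> of \<open>\<alpha> \<in> \<real>\<^sup>I\<close> and
  \<open>n \<in> \<int>\<close> has the form \<open>\<Sum>\<^sub>k c\<^sub>k(\<alpha>) b\<^sub>k(p(\<alpha>), n)\<close>, where the \<open>c\<^sub>k\<close> are gp, the finitely
  many parameters \<open>p\<^sub>j(\<alpha>)\<close> are gp with values in \<open>[0,1)\<close>, and the \<open>b\<^sub>k\<close> are gp and
  integer-valued at integer \<open>n\<close>.  The only nontrivial case is the integer part, where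
  \<open>\<lfloor>\<Sum> c\<^sub>k b\<^sub>k\<rfloor> = \<Sum> \<lfloor>c\<^sub>k\<rfloor> b\<^sub>k + \<lfloor>\<Sum> frac(c\<^sub>k) b\<^sub>k\<rfloor>\<close> adjoins the parameters \<open>frac(c\<^sub>k)\<close>.
  If \<open>g = \<Sum> c\<^sub>k b\<^sub>k\<close> takes values in \<open>{0, \<dots>, M-1}\<close>, then
  \<open>g = M frac(g/M) = M frac(\<Sum> frac(c\<^sub>k/M) b\<^sub>k)\<close>, a gp function of parameters in \<open>[0,1)\<close>
  alone, which therefore extends along \<open>\<alpha> \<mapsto> (p(\<alpha>), frac(c\<^sub>k(\<alpha>)/M))\<close>.\<close>

lemma sum_list_mult_sum_list:
  fixes f g :: "_ \<Rightarrow> 'a::semiring_0"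
  shows "(\<Sum>x\<leftarrow>xs. f x) * (\<Sum>y\<leftarrow>ys. g y) = (\<Sum>(x, y)\<leftarrow>List.product xs ys. f x * g y)"
  by (induction xs) (simp_all add: distrib_right sum_list_const_mult comp_def)

lemma sum_list_mult_floor_frac:
  fixes c b :: "'t \<Rightarrow> 'a::{floor_ceiling}"
  shows "(\<Sum>t\<leftarrow>ts. c t * b t) = (\<Sum>t\<leftarrow>ts. of_int \<lfloor>c t\<rfloor> * b t) + (\<Sum>t\<leftarrow>ts. frac (c t) * b t)"
  by (simp add: frac_def algebra_simps sum_list_subtractf)

lemma sum_list_Ints: "(\<And>t. t \<in> set ts \<Longrightarrow> f t \<in> \<int>) \<Longrightarrow> (\<Sum>t\<leftarrow>ts. f t) \<in> \<int>"
  by (induction ts) auto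

lemma gp_mono: "gp V f \<Longrightarrow> V \<subseteq> W \<Longrightarrow> gp W f"
  by (induction rule: gp.induct) (auto intro: gp.intros)

lemma gp_cong: "gp V f \<Longrightarrow> (\<And>v. v \<in> V \<Longrightarrow> x v = y v) \<Longrightarrow> f x = f y"
  by (induction rule: gp.induct) auto

lemma gp_rename:
  assumes "gp V f" "\<And>v. v \<in> V \<Longrightarrow> \<sigma> v \<in> W"
  shows "gp W (\<lambda>x. f (\<lambda>v. x (\<sigma> v)))"
  using assms(1) by induction (auto intro: gp.intros assms(2))

lemma gp_diff: "gp V f \<Longrightarrow> gp V g \<Longrightarrow> gp V (\<lambda>x. f x - g x)"
  using gp.gp_add[OF _ gp.gp_mult[OF gp.gp_const[of V "-1"], of g]] by simp

lemma gp_frac: "gp V f \<Longrightarrow> gp V (\<lambda>x. frac (f x))"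
  unfolding frac_def by (intro gp_diff gp.gp_floor)

lemma gp_sum_list: "(\<And>t. t \<in> set ts \<Longrightarrow> gp V (f t)) \<Longrightarrow> gp V (\<lambda>x. \<Sum>t\<leftarrow>ts. f t x)"
  by (induction ts) (auto intro: gp.intros)

definition env :: "('v \<Rightarrow> real) \<Rightarrow> int \<Rightarrow> 'v option \<Rightarrow> real" where
  "env x n = (\<lambda>v. case v of None \<Rightarrow> real_of_int n | Some i \<Rightarrow> x i)"

definition frac_params :: "'a set \<Rightarrow> (('a \<Rightarrow> real) \<Rightarrow> real) set \<Rightarrow> bool" where
  "frac_params I P \<longleftrightarrow> finite P \<and> (\<forall>q\<in>P. gp I q \<and> (\<forall>\<alpha>. 0 \<le> q \<alpha> \<and> q \<alpha> < 1))"

definition gp_integral :: "'v set \<Rightarrow> (('v option \<Rightarrow> real) \<Rightarrow> real) \<Rightarrow> bool" where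
  "gp_integral V b \<longleftrightarrow> gp (insert None (Some ` V)) b \<and> (\<forall>x. x None \<in> \<int> \<longrightarrow> b x \<in> \<int>)"

text \<open>\<open>G(\<alpha>, n) = \<Sum>\<^sub>k c\<^sub>k(\<alpha>) b\<^sub>k(p(\<alpha>), n)\<close>: each parameter function \<open>q \<in> P\<close> serves directly
  as the name \<open>Some q\<close> of a variable of the \<open>b\<^sub>k\<close>.\<close>
definition gp_normal_form :: "'a set \<Rightarrow> (('a \<Rightarrow> real) \<Rightarrow> int \<Rightarrow> real) \<Rightarrow> bool" where
  "gp_normal_form I G \<longleftrightarrow>
     (\<exists>P ts. frac_params I P \<and> (\<forall>(c, b)\<in>set ts. gp I c \<and> gp_integral P b) \<and>
       (\<forall>\<alpha> n. G \<alpha> n = (\<Sum>(c, b)\<leftarrow>ts. c \<alpha> * b (env (\<lambda>q. q \<alpha>) n))))"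

lemma frac_params_Un: "frac_params I P \<Longrightarrow> frac_params I Q \<Longrightarrow> frac_params I (P \<union> Q)"
  by (auto simp: frac_params_def)

lemma frac_params_frac_image:
  assumes "finite C" "\<forall>c\<in>C. gp I c"
  shows "frac_params I ((\<lambda>c \<alpha>. frac (c \<alpha>)) ` C)"
  using assms unfolding frac_params_def by (auto intro!: gp_frac frac_lt_1)

lemma gp_integral_mono: "gp_integral V b \<Longrightarrow> V \<subseteq> W \<Longrightarrow> gp_integral W b"
  unfolding gp_integral_def by (blast intro: gp_mono)

lemma gp_integral_mult: "gp_integral V b \<Longrightarrow> gp_integral V b' \<Longrightarrow> gp_integral V (\<lambda>x. b x * b' x)"
  unfolding gp_integral_def by (blast intro: gp.gp_mult Ints_mult)

lemma sum_integral_terms_Ints: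
  assumes "\<forall>(c, b)\<in>set ts. range c \<subseteq> \<int> \<and> gp_integral P b"
  shows "(\<Sum>(c, b)\<leftarrow>ts. c \<alpha> * b (env x n)) \<in> \<int>"
proof -
  have "c \<alpha> * b (env x n) \<in> \<int>" if "(c, b) \<in> set ts" for c b
    using bspec[OF assms that] by (auto simp: gp_integral_def env_def intro!: Ints_mult)
  then show ?thesis
    unfolding case_prod_unfold by (auto intro: sum_list_Ints)
qed

lemma gp_normal_form_single:
  assumes "frac_params I P" "gp I c" "gp_integral P b"
    and "\<And>\<alpha> n. G \<alpha> n = c \<alpha> * b (env (\<lambda>q. q \<alpha>) n)"
  shows "gp_normal_form I G"
  unfolding gp_normal_form_def using assms by (intro exI[of _ P] exI[of _ "[(c, b)]"]) simp

lemma gp_normal_form_add: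
  assumes "gp_normal_form I G" "gp_normal_form I G'"
  shows "gp_normal_form I (\<lambda>\<alpha> n. G \<alpha> n + G' \<alpha> n)"
proof -
  obtain P ts P' ts' where "frac_params I P" "frac_params I P'"
    and "\<forall>(c, b)\<in>set ts. gp I c \<and> gp_integral P b" "\<forall>(c, b)\<in>set ts'. gp I c \<and> gp_integral P' b"
    and "\<forall>\<alpha> n. G \<alpha> n = (\<Sum>(c, b)\<leftarrow>ts. c \<alpha> * b (env (\<lambda>q. q \<alpha>) n))"
        "\<forall>\<alpha> n. G' \<alpha> n = (\<Sum>(c, b)\<leftarrow>ts'. c \<alpha> * b (env (\<lambda>q. q \<alpha>) n))"
    using assms unfolding gp_normal_form_def by metis
  then show ?thesis
    unfolding gp_normal_form_def
    by (intro exI[of _ "P \<union> P'"] exI[of _ "ts @ ts'"])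
       (auto simp: frac_params_Un intro: gp_integral_mono)
qed

lemma gp_normal_form_mult:
  assumes "gp_normal_form I G" "gp_normal_form I G'"
  shows "gp_normal_form I (\<lambda>\<alpha> n. G \<alpha> n * G' \<alpha> n)"
proof -
  obtain P ts P' ts' where P: "frac_params I P" "frac_params I P'"
    and ts: "\<forall>(c, b)\<in>set ts. gp I c \<and> gp_integral P b"
    and ts': "\<forall>(c, b)\<in>set ts'. gp I c \<and> gp_integral P' b"
    and G: "\<And>\<alpha> n. G \<alpha> n = (\<Sum>(c, b)\<leftarrow>ts. c \<alpha> * b (env (\<lambda>q. q \<alpha>) n))"
    and G': "\<And>\<alpha> n. G' \<alpha> n = (\<Sum>(c, b)\<leftarrow>ts'. c \<alpha> * b (env (\<lambda>q. q \<alpha>) n))"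
    using assms unfolding gp_normal_form_def by metis
  define prod_ts where "prod_ts =
    map (\<lambda>((c, b), (c', b')). (\<lambda>\<alpha>. c \<alpha> * c' \<alpha>, \<lambda>x. b x * b' x)) (List.product ts ts')"
  have "gp I (\<lambda>\<alpha>. c \<alpha> * c' \<alpha>) \<and> gp_integral (P \<union> P') (\<lambda>x. b x * b' x)"
    if "(c, b) \<in> set ts" "(c', b') \<in> set ts'" for c b c' b'
    using ts ts' that by (auto intro!: gp.gp_mult gp_integral_mult elim: gp_integral_mono)
  then have "\<forall>(c, b)\<in>set prod_ts. gp I c \<and> gp_integral (P \<union> P') b"
    unfolding prod_ts_def by auto
  moreover have "G \<alpha> n * G' \<alpha> n = (\<Sum>(c, b)\<leftarrow>prod_ts. c \<alpha> * b (env (\<lambda>q. q \<alpha>) n))" for \<alpha> n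
    unfolding G G' sum_list_mult_sum_list prod_ts_def by (simp add: case_prod_unfold comp_def mult_ac)
  ultimately show ?thesis
    unfolding gp_normal_form_def using frac_params_Un[OF P] by blast
qed

text \<open>Split each coefficient as \<open>c = \<lfloor>c\<rfloor> + frac c\<close>; the fractional parts become new parameters.\<close>
lemma gp_normal_form_decompose:
  assumes "gp_normal_form I G"
  shows "\<exists>P Z S. frac_params I P \<and> gp_normal_form I Z \<and> (\<forall>\<alpha> n. Z \<alpha> n \<in> \<int>) \<and>
    gp (insert None (Some ` P)) S \<and> (\<forall>\<alpha> n. G \<alpha> n = Z \<alpha> n + S (env (\<lambda>q. q \<alpha>) n))"
proof -
  obtain P ts where P: "frac_params I P" and ts: "\<forall>(c, b)\<in>set ts. gp I c \<and> gp_integral P b"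
    and G: "\<And>\<alpha> n. G \<alpha> n = (\<Sum>(c, b)\<leftarrow>ts. c \<alpha> * b (env (\<lambda>q. q \<alpha>) n))"
    using assms unfolding gp_normal_form_def by metis
  define frac_coeff :: "(('a \<Rightarrow> real) \<Rightarrow> real) \<Rightarrow> ('a \<Rightarrow> real) \<Rightarrow> real"
    where "frac_coeff = (\<lambda>c \<alpha>. frac (c \<alpha>))"
  define P' where "P' = P \<union> frac_coeff ` fst ` set ts"
  define S where "S x = (\<Sum>(c, b)\<leftarrow>ts. x (Some (frac_coeff c)) * b x)" for x
  define int_ts where "int_ts = map (\<lambda>(c, b). (\<lambda>\<alpha>. real_of_int \<lfloor>c \<alpha>\<rfloor>, b)) ts"
  define Z where "Z \<alpha> n = (\<Sum>(c, b)\<leftarrow>int_ts. c \<alpha> * b (env (\<lambda>q. q \<alpha>) n))" for \<alpha> n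
  have "frac_params I (frac_coeff ` fst ` set ts)"
    unfolding frac_coeff_def using ts by (intro frac_params_frac_image) auto
  with P have P': "frac_params I P'"
    unfolding P'_def by (rule frac_params_Un)
  have ts_P': "gp I c \<and> gp_integral P' b" if "(c, b) \<in> set ts" for c b
    using ts that gp_integral_mono[of P b P'] by (auto simp: P'_def)
  then have int_ts: "\<forall>(c, b)\<in>set int_ts. gp I c \<and> range c \<subseteq> \<int> \<and> gp_integral P' b"
    unfolding int_ts_def by (auto intro: gp.gp_floor)
  then have Z: "gp_normal_form I Z"
    unfolding gp_normal_form_def Z_def using P' by fast
  have Z_Ints: "Z \<alpha> n \<in> \<int>" for \<alpha> n
    unfolding Z_def using int_ts by (intro sum_integral_terms_Ints) blast
  have S: "gp (insert None (Some ` P')) S"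
  proof -
    have "gp (insert None (Some ` P')) (\<lambda>x. x (Some (frac_coeff c)) * b x)"
      if "(c, b) \<in> set ts" for c b
    proof (rule gp.gp_mult)
      show "gp (insert None (Some ` P')) (\<lambda>x. x (Some (frac_coeff c)))"
        using that by (intro gp.gp_var) (force simp: P'_def)
      show "gp (insert None (Some ` P')) b"
        using ts_P'[OF that] by (simp add: gp_integral_def)
    qed
    then show ?thesis
      unfolding S_def by (auto intro!: gp_sum_list)
  qed
  have "G \<alpha> n = Z \<alpha> n + S (env (\<lambda>q. q \<alpha>) n)" for \<alpha> n
    unfolding G Z_def case_prod_unfold sum_list_mult_floor_frac[of "\<lambda>t. fst t \<alpha>"]
    by (simp add: int_ts_def S_def frac_coeff_def env_def case_prod_unfold comp_def)
  with P' Z Z_Ints S show ?thesis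
    by blast
qed

lemma gp_normal_form_floor:
  assumes "gp_normal_form I G"
  shows "gp_normal_form I (\<lambda>\<alpha> n. of_int \<lfloor>G \<alpha> n\<rfloor>)"
proof -
  obtain P Z S where P: "frac_params I P" and Z: "gp_normal_form I Z" "\<And>\<alpha> n. Z \<alpha> n \<in> \<int>"
    and S: "gp (insert None (Some ` P)) S" and G: "\<And>\<alpha> n. G \<alpha> n = Z \<alpha> n + S (env (\<lambda>q. q \<alpha>) n)"
    using gp_normal_form_decompose[OF assms] by blast
  have floor_S: "gp_normal_form I (\<lambda>\<alpha> n. of_int \<lfloor>S (env (\<lambda>q. q \<alpha>) n)\<rfloor>)"
    by (rule gp_normal_form_single[OF P, of "\<lambda>_. 1" "\<lambda>x. of_int \<lfloor>S x\<rfloor>"])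
       (auto simp: gp_integral_def intro: gp.gp_const gp.gp_floor S)
  have floor_G: "of_int \<lfloor>G \<alpha> n\<rfloor> = Z \<alpha> n + of_int \<lfloor>S (env (\<lambda>q. q \<alpha>) n)\<rfloor>" for \<alpha> n
  proof -
    obtain z where "Z \<alpha> n = of_int z"
      using Z(2) by (blast elim: Ints_cases)
    then show ?thesis
      unfolding G by (simp flip: int_add_floor)
  qed
  show ?thesis
    unfolding floor_G by (rule gp_normal_form_add[OF Z(1) floor_S])
qed

lemma gp_normal_form_gp:
  assumes "gp (insert None (Some ` I)) F"
  shows "gp_normal_form I (\<lambda>\<alpha> n. F (env \<alpha> n))"
  using assms
proof induction
  case (gp_const c)
  show ?case
    by (rule gp_normal_form_single[of I "{}" "\<lambda>_. c" "\<lambda>_. 1"])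
       (auto simp: frac_params_def gp_integral_def intro: gp.intros)
next
  case (gp_var v)
  then consider "v = None" | i where "i \<in> I" "v = Some i"
    by blast
  then show ?case
  proof cases
    case 1
    show ?thesis
      by (rule gp_normal_form_single[of I "{}" "\<lambda>_. 1" "\<lambda>x. x None"])
         (auto simp: frac_params_def gp_integral_def env_def 1 intro: gp.intros)
  next
    case 2
    show ?thesis
      by (rule gp_normal_form_single[of I "{}" "\<lambda>\<alpha>. \<alpha> i" "\<lambda>_. 1"])
         (auto simp: frac_params_def gp_integral_def env_def 2 intro: gp.intros)
  qed
qed (simp_all add: gp_normal_form_add gp_normal_form_mult gp_normal_form_floor)

text \<open>Decompose \<open>G/M = Z + S\<close>; if \<open>G \<in> {0..<M}\<close> then \<open>G = M frac (G/M) = M frac S\<close>.\<close>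
lemma gp_normal_form_bounded_int:
  assumes "gp_normal_form I G" "M > 0"
  shows "\<exists>P H. frac_params I P \<and> gp (insert None (Some ` P)) H \<and> (\<forall>x. H x \<in> real ` {0..<M}) \<and>
    (\<forall>\<alpha> n. G \<alpha> n \<in> real ` {0..<M} \<longrightarrow> G \<alpha> n = H (env (\<lambda>q. q \<alpha>) n))"
proof -
  have "gp_normal_form I (\<lambda>\<alpha> n. 1 / real M)"
    by (rule gp_normal_form_single[of I "{}" "\<lambda>_. 1 / real M" "\<lambda>_. 1"])
       (auto simp: frac_params_def gp_integral_def intro: gp.gp_const)
  then have "gp_normal_form I (\<lambda>\<alpha> n. 1 / real M * G \<alpha> n)"
    using assms(1) by (rule gp_normal_form_mult)
  then obtain P Z S where P: "frac_params I P" and Z: "\<And>\<alpha> n. Z \<alpha> n \<in> \<int>"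
    and S: "gp (insert None (Some ` P)) S"
    and G: "\<And>\<alpha> n. 1 / real M * G \<alpha> n = Z \<alpha> n + S (env (\<lambda>q. q \<alpha>) n)"
    using gp_normal_form_decompose by blast
  define H where "H x = real_of_int \<lfloor>real M * frac (S x)\<rfloor>" for x
  have "gp (insert None (Some ` P)) H"
    unfolding H_def by (intro gp.gp_floor gp.gp_mult gp.gp_const gp_frac S)
  moreover have "H x \<in> real ` {0..<M}" for x
  proof -
    have "\<lfloor>real M * frac (S x)\<rfloor> < int M"
      using assms(2) frac_lt_1[of "S x"] by (simp add: floor_less_iff)
    then show ?thesis
      unfolding H_def
      by (intro image_eqI[of _ _ "nat \<lfloor>real M * frac (S x)\<rfloor>"]) (auto simp: nat_less_iff)
  qed
  moreover have "G \<alpha> n = H (env (\<lambda>q. q \<alpha>) n)" if G_range: "G \<alpha> n \<in> real ` {0..<M}" for \<alpha> n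
  proof -
    obtain k where k: "k < M" "G \<alpha> n = real k"
      using G_range by auto
    have "frac (S (env (\<lambda>q. q \<alpha>) n)) = frac (1 / real M * G \<alpha> n)"
      unfolding G using Z by (simp add: frac_add_int_left)
    also have "\<dots> = 1 / real M * G \<alpha> n"
      using k by (simp add: frac_eq)
    finally have "real M * frac (S (env (\<lambda>q. q \<alpha>) n)) = G \<alpha> n"
      using assms(2) by simp
    then show ?thesis
      using k by (simp add: H_def)
  qed
  ultimately show ?thesis
    using P by blast
qed

lemma gp_extends_frac_params:
  fixes g :: "('a \<Rightarrow> real) \<Rightarrow> int \<Rightarrow> real"
  assumes P: "frac_params I P"
    and H: "gp (insert None (Some ` P)) H" "\<And>x. H x \<in> S"
    and g: "\<And>\<alpha> n. \<alpha> \<in> Omega I {} {} \<Longrightarrow> g \<alpha> n = H (env (\<lambda>q. q \<alpha>) n)"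
  shows "\<exists>(J :: nat set) h. finite J \<and> gp_param {} {} J S h \<and> gp_extends {} {} J h I {} {} g"
proof -
  define N where "N = card P"
  obtain e where e: "bij_betw e {0..<N} P"
    using P ex_bij_betw_nat_finite unfolding frac_params_def N_def by blast
  define idx where "idx = the_inv_into {0..<N} e"
  have idx: "idx q < N" "e (idx q) = q" if "q \<in> P" for q
    using e that bij_betwE[OF bij_betw_the_inv_into[OF e]] unfolding idx_def
    by (auto intro: f_the_inv_into_f_bij_betw)
  define h where "h \<beta> n = H (\<lambda>v. env \<beta> n (map_option idx v))" for \<beta> :: "nat \<Rightarrow> real" and n
  define \<phi> where "\<phi> \<alpha> = (\<lambda>j. if j < N then e j \<alpha> else 0)" for \<alpha> :: "'a \<Rightarrow> real"
  have "gp (insert None (Some ` {0..<N})) (\<lambda>y. H (\<lambda>v. y (map_option idx v)))"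
    using idx(1) by (intro gp_rename[OF H(1)]) auto
  then have "gp_param {} {} {0..<N} S h"
    unfolding gp_param_def h_def env_def using H(2) by auto
  moreover have "gp_extends {} {} {0..<N} h I {} {} g"
    unfolding gp_extends_def
  proof (intro exI[of _ \<phi>] conjI ballI)
    show "gp_map (I \<union> {} \<union> {}) ({} \<union> {} \<union> {0..<N}) \<phi>"
      using P e unfolding gp_map_def \<phi>_def frac_params_def bij_betw_def by auto
    show "\<phi> ` Omega I {} {} \<subseteq> Omega {} {} {0..<N}"
      using P e unfolding Omega_def \<phi>_def frac_params_def bij_betw_def by auto
    fix \<alpha> assume \<alpha>: "\<alpha> \<in> Omega I {} {}"
    show "g \<alpha> = h (\<phi> \<alpha>)"
    proof
      fix n
      have "H (env (\<lambda>q. q \<alpha>) n) = H (\<lambda>v. env (\<phi> \<alpha>) n (map_option idx v))"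
        by (rule gp_cong[OF H(1)]) (auto simp: env_def \<phi>_def idx)
      then show "g \<alpha> n = h (\<phi> \<alpha>) n"
        using g[OF \<alpha>] by (simp add: h_def)
    qed
  qed
  ultimately show ?thesis
    by blast
qed

theorem proposition3p5:
  fixes M :: nat and I :: "'a set" and g :: "('a \<Rightarrow> real) \<Rightarrow> int \<Rightarrow> real"
  assumes "finite I"
    and "gp_param I {} {} (real ` {0..<M}) g"
  shows "\<exists>(J :: nat set) (h :: (nat \<Rightarrow> real) \<Rightarrow> int \<Rightarrow> real).
           finite J \<and> gp_param {} {} J (real ` {0..<M}) h \<and>
           gp_extends {} {} J h I {} {} g"
proof -
  obtain F where g_range: "\<forall>\<alpha>\<in>Omega I {} {}. \<forall>n. g \<alpha> n \<in> real ` {0..<M}"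
    and F: "gp (insert None (Some ` I)) F"
    and g: "\<forall>\<alpha>\<in>Omega I {} {}. \<forall>n. g \<alpha> n = F (env \<alpha> n)"
    using assms(2) unfolding gp_param_def env_def Un_empty_right by blast
  have "M > 0"
    using g_range by (fastforce simp: Omega_def)
  with gp_normal_form_gp[OF F] obtain P H where P: "frac_params I P"
    and H: "gp (insert None (Some ` P)) H" "\<And>x. H x \<in> real ` {0..<M}"
    and F_H: "\<And>\<alpha> n. F (env \<alpha> n) \<in> real ` {0..<M} \<Longrightarrow> F (env \<alpha> n) = H (env (\<lambda>q. q \<alpha>) n)"
    by (blast dest: gp_normal_form_bounded_int)
  have "g \<alpha> n = H (env (\<lambda>q. q \<alpha>) n)" if "\<alpha> \<in> Omega I {} {}" for \<alpha> n
    using g_range g F_H that by simp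
  with P H show ?thesis
    by (rule gp_extends_frac_params)
qed

end
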